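(* Let $y,t$ be formal variables. Then, as formal power series in $t$ with coefficients polynomial in $y$, $$\sum_{n\ge 1}\sum_{[\pi]\in\mathfrak{C}_n^o}y^{\operatorname{drop}_{eo}([\pi])}t^n = (y-1)t^2+ \sum_{m\ge 1}\frac{m!(m-1)!\,t^{2m}}{\prod_{k=1}^m \big(1+k(k+1)(1-y)t^2\big)}+\sum_{m\ge 1}\frac{\big((m-1)!\big)^2t^{2m-1}}{\prod_{k=1}^m \big(1+k(k-1)(1-y)t^2\big)}.$$
   Context: For $n\ge1$, a cycle on $[n]=\{1,\dots,n\}$ is an equivalence class $[\pi]$ of permutations $\pi=\pi_1\cdots\pi_n$ of $[n]$ (in one-line notation) under cyclic rotation of the entries; the set of cycles on $[n]$ is $\mathfrak{C}_n$. Each cycle is represented by the permutation $\pi$ with $\pi_1=1$, and indices are read modulo $n$ (so $\pi_{n+1}=\pi_1$). A drop of $[\pi]$ is a consecutive pair $(\pi_i,\pi_{i+1})$, $1\le i\le n$, with $\pi_i>\pi_{i+1}$; drops do not depend on the choice of rotation. By convention, the unique cycle $[(1)]\in\mathfrak{C}_1$ has exactly one drop $(\star,1)$, where $\star$ is considered neither even nor odd. A drop $(a,b)$ is odd-odd if $a$ and $b$ are both odd, and even-odd if $a$ is even and $b$ is odd. $\operatorname{drop}_{oo}([\pi])$ and $\operatorname{drop}_{eo}([\pi])$ denote the numbers of odd-odd and even-odd drops of $[\pi]$, respectively. Finally $\mathfrak{C}_n^o$ is the set of cycles $[\pi]\in\mathfrak{C}_n$ such that for every drop $(\pi_i,\pi_{i+1})$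 of $[\pi]$, the entry $\pi_{i+1}$ is odd. *)

theory Defs
  imports "HOL-Computational_Algebra.Formal_Power_Series"
          "HOL-Computational_Algebra.Polynomial"
          "HOL-Computational_Algebra.Fraction_Field"
begin

text \<open>A cycle on [n] is represented by its unique rotation pi (a list) with first entry 1.\<close>
definition cycles :: "nat \<Rightarrow> nat list set" where
  "cycles n = {p. distinct p \<and> set p = {1..n} \<and> hd p = 1}"

definition drop_pos :: "nat list \<Rightarrow> nat set" where
  "drop_pos p = {i. i < length p \<and> p ! ((i + 1) mod length p) < p ! i}"

definition drop_eo :: "nat list \<Rightarrow> nat" where
  "drop_eo p = card {i \<in> drop_pos p. even (p ! i) \<and> odd (p ! ((i + 1) mod length p))}"

definition drop_oo :: "nat list \<Rightarrow> nat" where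
  "drop_oo p = card {i \<in> drop_pos p. odd (p ! i) \<and> odd (p ! ((i + 1) mod length p))}"

definition cycles_o :: "nat \<Rightarrow> nat list set" where
  "cycles_o n = {p \<in> cycles n. \<forall>i \<in> drop_pos p. odd (p ! ((i + 1) mod length p))}"

definition yvar :: "int poly fract" where
  "yvar = Fract [:0, 1:] 1"

end

theory Submission
  imports Defs
begin

(* Removing the entry n from a cycle in C_n^o leaves a cycle in C_{n-1}^o together with the
   pair (a, b) of neighbours of n, where b is odd because (n, b) is a drop; conversely n may be
   inserted into any such pair. Each cycle of C_{n-1}^o has floor(n/2) pairs ending in an odd
   entry; inserting n destroys the pair (a, b) and creates the drop (n, b), which is even-odd iff
   n is even. Hence G_n(y), the distribution of drop_eo over C_n^o, satisfies
     G_n = y^[n even] * (floor(n/2) * G_{n-1} + (1 - y) * G_{n-1}').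
   In the variable u = y - 1 the operator k f + (1 - y) f' acts diagonally, u^j |-> (k - j) u^j,
   so G_n is an explicit combination of powers of u whose coefficients are complete homogeneous
   symmetric functions h_j of the pronic numbers 1*2, ..., M(M+1). Those are exactly the
   coefficients of 1 / prod_{k <= M} (1 - k(k+1) u t^2), which gives the right-hand side. *)

section \<open>Cyclic successor pairs\<close>

definition cyc_pairs :: "'a list \<Rightarrow> ('a \<times> 'a) set" where
  "cyc_pairs xs = set (zip xs (rotate1 xs))"

lemma cyc_pairs_conv_nth: "cyc_pairs xs = {(xs ! i, rotate1 xs ! i) | i. i < length xs}"
  unfolding cyc_pairs_def by (auto simp: set_zip)

lemma finite_cyc_pairs [simp]: "finite (cyc_pairs xs)"
  by (simp add: cyc_pairs_def)

lemma fst_image_cyc_pairs [simp]: "fst ` cyc_pairs xs = set xs"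
  unfolding cyc_pairs_def by (metis list.set_map map_fst_zip length_rotate1)

lemma snd_image_cyc_pairs [simp]: "snd ` cyc_pairs xs = set xs"
  unfolding cyc_pairs_def by (metis list.set_map map_snd_zip length_rotate1 set_rotate1)

lemma cyc_pairs_subset: "cyc_pairs xs \<subseteq> set xs \<times> set xs"
  unfolding cyc_pairs_def by (auto dest: set_zip_leftD set_zip_rightD)

lemma cyc_pairs_unique_snd:
  assumes "distinct xs" "(x, y) \<in> cyc_pairs xs" "(x, y') \<in> cyc_pairs xs"
  shows "y = y'"
  using assms by (auto simp: cyc_pairs_conv_nth nth_eq_iff_index_eq)

lemma cyc_pairs_unique_fst:
  assumes "distinct xs" "(x, y) \<in> cyc_pairs xs" "(x', y) \<in> cyc_pairs xs"
  shows "x = x'"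
proof -
  have "distinct (rotate1 xs)" using assms(1) by simp
  with assms show ?thesis by (auto simp: cyc_pairs_conv_nth nth_eq_iff_index_eq)
qed

lemma cyc_pairs_rotate1 [simp]: "cyc_pairs (rotate1 xs) = cyc_pairs xs"
proof (cases xs)
  case (Cons x ys)
  show ?thesis
  proof (cases ys)
    case (Cons y zs)
    have "zip (y # zs @ [x]) (zs @ [x] @ [y]) = zip (y # zs) (zs @ [x]) @ [(x, y)]"
      using zip_append[of "y # zs" "zs @ [x]" "[x]" "[y]"] by simp
    with \<open>xs = x # ys\<close> Cons show ?thesis by (auto simp: cyc_pairs_def)
  qed (use Cons in \<open>simp add: cyc_pairs_def\<close>)
qed simp

lemma cyc_pairs_rotate [simp]: "cyc_pairs (rotate n xs) = cyc_pairs xs"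
  by (induction n) simp_all

lemma cyc_pairs_append_commute: "cyc_pairs (xs @ ys) = cyc_pairs (ys @ xs)"
  by (metis cyc_pairs_rotate rotate_append)

lemma cyc_pairs_Cons:
  "cyc_pairs (a # xs) = insert (a, hd (xs @ [a])) (set (zip xs (tl (xs @ [a]))))"
  by (cases xs) (simp_all add: cyc_pairs_def)

definition insert_after :: "'a \<Rightarrow> 'a \<Rightarrow> 'a list \<Rightarrow> 'a list" where
  "insert_after n a xs = concat (map (\<lambda>x. if x = a then [a, n] else [x]) xs)"

lemma insert_after_append_Cons:
  assumes "a \<notin> set xs" "a \<notin> set ys"
  shows "insert_after n a (xs @ a # ys) = xs @ a # n # ys"
proof -
  have "concat (map (\<lambda>x. if x = a then [a, n] else [x]) zs) = zs" if "a \<notin> set zs" for zs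
    using that by (induction zs) auto
  with assms show ?thesis by (simp add: insert_after_def)
qed

lemma filter_insert_after: "n \<notin> set xs \<Longrightarrow> filter (\<lambda>x. x \<noteq> n) (insert_after n a xs) = xs"
  unfolding insert_after_def by (induction xs) auto

lemma distinct_set_hd_insert_after:
  assumes "distinct xs" "n \<notin> set xs" "a \<in> set xs"
  shows "distinct (insert_after n a xs)" "set (insert_after n a xs) = insert n (set xs)"
    "hd (insert_after n a xs) = hd xs"
proof -
  obtain ys zs where xs: "xs = ys @ a # zs"
    using assms(3) by (meson split_list)
  with assms(1) have "insert_after n a xs = ys @ a # n # zs"
    by (simp add: insert_after_append_Cons)
  with assms xs show "distinct (insert_after n a xs)" "set (insert_after n a xs) = insert n (set xs)"
    "hd (insert_after n a xs) = hd xs"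
    by (auto simp: hd_append)
qed

lemma cyc_pairs_insert_after:
  assumes "distinct xs" "n \<notin> set xs" "(a, b) \<in> cyc_pairs xs"
  shows "cyc_pairs (insert_after n a xs) = insert (a, n) (insert (n, b) (cyc_pairs xs - {(a, b)}))"
proof -
  have "a \<in> set xs"
    using assms(3) cyc_pairs_subset by blast
  then obtain ys zs where xs: "xs = ys @ a # zs"
    by (meson split_list)
  define ws where "ws = zs @ ys"
  have a_ws: "a \<notin> set ws" "distinct (a # ws)"
    using assms(1) xs by (auto simp: ws_def)
  define R where "R = set (zip ws (tl (ws @ [a])))"
  have pairs_xs: "cyc_pairs xs = insert (a, hd (ws @ [a])) R"
    using cyc_pairs_append_commute[of ys "a # zs"] by (simp add: xs ws_def R_def cyc_pairs_Cons)
  have b: "b = hd (ws @ [a])"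
    using cyc_pairs_unique_snd[OF assms(1) assms(3)] pairs_xs by blast
  have "(a, b) \<notin> R"
    using a_ws(1) by (auto simp: R_def dest: set_zip_leftD)
  then have pairs_xs': "cyc_pairs xs - {(a, b)} = R"
    using pairs_xs b by blast
  have "zip (n # ws) (ws @ [a]) = (n, b) # zip ws (tl (ws @ [a]))"
    by (cases ws) (simp_all add: b)
  then have "cyc_pairs (insert_after n a xs) = insert (a, n) (insert (n, b) R)"
    using assms(1) cyc_pairs_append_commute[of ys "a # n # zs"]
    by (simp add: xs insert_after_append_Cons cyc_pairs_def R_def ws_def)
  then show ?thesis
    unfolding pairs_xs' .
qed

section \<open>Inserting the largest entry into a cycle\<close>

lemma finite_cycles: "finite (cycles n)"
proof -
  have "cycles n \<subseteq> {xs. set xs \<subseteq> {1..n} \<and> length xs = n}"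
    by (auto simp: cycles_def dest: distinct_card)
  then show ?thesis
    using finite_lists_length_eq[of "{1..n}" n] by (auto intro: finite_subset)
qed

lemma finite_cycles_o: "finite (cycles_o n)"
  using finite_cycles[of n] by (auto simp: cycles_o_def intro: finite_subset)

lemma drop_pos_conv_cyc_pairs:
  "(\<lambda>i. (p ! i, p ! ((i + 1) mod length p))) ` drop_pos p = {(x, y) \<in> cyc_pairs p. y < x}"
proof -
  have "cyc_pairs p = (\<lambda>i. (p ! i, p ! ((i + 1) mod length p))) ` {..<length p}"
    by (auto simp: cyc_pairs_conv_nth nth_rotate1)
  then show ?thesis
    unfolding drop_pos_def by auto
qed

lemma cycles_o_iff:
  "p \<in> cycles_o n \<longleftrightarrow> p \<in> cycles n \<and> (\<forall>(x, y) \<in> cyc_pairs p. y < x \<longrightarrow> odd y)"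
proof -
  have "(\<forall>i \<in> drop_pos p. odd (p ! ((i + 1) mod length p)))
      \<longleftrightarrow> (\<forall>(x, y) \<in> {(x, y) \<in> cyc_pairs p. y < x}. odd y)"
    unfolding drop_pos_conv_cyc_pairs[symmetric] by auto
  then show ?thesis
    unfolding cycles_o_def by auto
qed

definition eo_drops :: "nat list \<Rightarrow> (nat \<times> nat) set" where
  "eo_drops p = {(x, y) \<in> cyc_pairs p. y < x \<and> even x \<and> odd y}"

lemma drop_eo_eq_card:
  assumes "distinct p"
  shows "drop_eo p = card (eo_drops p)"
proof -
  let ?pair = "\<lambda>i. (p ! i, p ! ((i + 1) mod length p))"
  let ?I = "{i \<in> drop_pos p. even (p ! i) \<and> odd (p ! ((i + 1) mod length p))}"
  have inj: "inj_on ?pair ?I"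
    using assms by (auto simp: inj_on_def drop_pos_def nth_eq_iff_index_eq)
  have "eo_drops p = {e \<in> {(x, y) \<in> cyc_pairs p. y < x}. even (fst e) \<and> odd (snd e)}"
    by (auto simp: eo_drops_def)
  then have image: "eo_drops p = ?pair ` ?I"
    unfolding drop_pos_conv_cyc_pairs[symmetric] Compr_image_eq by (simp only: fst_conv snd_conv)
  show ?thesis
    unfolding drop_eo_def image card_image[OF inj] ..
qed

definition odd_end_pairs :: "nat list \<Rightarrow> (nat \<times> nat) set" where
  "odd_end_pairs q = {(a, b) \<in> cyc_pairs q. odd b}"

lemma insert_after_mem_cycles_o:
  assumes "2 \<le> n" "q \<in> cycles_o (n - 1)" "(a, b) \<in> odd_end_pairs q"
  shows "insert_after n a q \<in> cycles_o n"
    and "cyc_pairs (insert_after n a q) = insert (a, n) (insert (n, b) (cyc_pairs q - {(a, b)}))"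
proof -
  have q: "distinct q" "set q = {1..n - 1}" "hd q = 1"
    and q_drops: "\<forall>(x, y) \<in> cyc_pairs q. y < x \<longrightarrow> odd y"
    using assms(2) by (auto simp: cycles_o_iff cycles_def)
  have ab: "(a, b) \<in> cyc_pairs q" "odd b"
    using assms(3) by (auto simp: odd_end_pairs_def)
  have "a \<in> set q"
    using ab(1) cyc_pairs_subset by blast
  have "n \<notin> set q"
    using q(2) by auto
  show pairs: "cyc_pairs (insert_after n a q) = insert (a, n) (insert (n, b) (cyc_pairs q - {(a, b)}))"
    using cyc_pairs_insert_after[OF q(1) \<open>n \<notin> set q\<close> ab(1)] .
  have "insert_after n a q \<in> cycles n"
    using distinct_set_hd_insert_after[OF q(1) \<open>n \<notin> set q\<close> \<open>a \<in> set q\<close>] q assms(1)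
    by (auto simp: cycles_def)
  moreover have "a < n"
    using \<open>a \<in> set q\<close> q(2) by auto
  then have "\<forall>(x, y) \<in> cyc_pairs (insert_after n a q). y < x \<longrightarrow> odd y"
    using q_drops ab(2) unfolding pairs by auto
  ultimately show "insert_after n a q \<in> cycles_o n"
    by (simp add: cycles_o_iff)
qed

lemma cycles_obtain_insert_after:
  assumes "2 \<le> n" "p \<in> cycles n"
  obtains q a where "q \<in> cycles (n - 1)" "a \<in> set q" "n \<notin> set q" "p = insert_after n a q"
proof -
  have p: "distinct p" "set p = {1..n}" "hd p = 1"
    using assms(2) by (auto simp: cycles_def)
  moreover have "n \<in> set p"
    using p(2) assms(1) by simp
  ultimately obtain xs ys where "p = xs @ n # ys"
    by (meson split_list)
  moreover have "xs \<noteq> []"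
    using p(3) assms(1) \<open>p = xs @ n # ys\<close> by auto
  ultimately obtain zs a where p_split: "p = zs @ a # n # ys"
    by (metis append.assoc append_Cons append_Nil rev_exhaust)
  define q where "q = zs @ a # ys"
  have "set q = set p - {n}"
    using p(1) p_split by (auto simp: q_def)
  then have "set q = {1..n - 1}"
    using p(2) by auto
  moreover have "distinct q" "n \<notin> set q"
    using p(1) p_split by (auto simp: q_def)
  moreover have "hd q = 1"
    using p(3) p_split by (cases zs) (auto simp: q_def)
  ultimately have "q \<in> cycles (n - 1)" "n \<notin> set q"
    by (simp_all add: cycles_def)
  moreover have "p = insert_after n a q"
    using p(1) by (simp add: p_split q_def insert_after_append_Cons)
  ultimately show thesis
    using that[of q a] by (simp add: q_def)
qed

lemma cycles_o_obtain_insert_after: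
  assumes "2 \<le> n" "p \<in> cycles_o n"
  obtains q a b where "q \<in> cycles_o (n - 1)" "(a, b) \<in> odd_end_pairs q" "p = insert_after n a q"
proof -
  have p_drops: "\<forall>(x, y) \<in> cyc_pairs p. y < x \<longrightarrow> odd y"
    using assms(2) by (simp add: cycles_o_iff)
  have "p \<in> cycles n"
    using assms(2) by (simp add: cycles_o_def)
  then obtain q a where q: "q \<in> cycles (n - 1)" "a \<in> set q" "n \<notin> set q"
    and p_eq: "p = insert_after n a q"
    using cycles_obtain_insert_after[OF assms(1)] by blast
  have "a \<in> fst ` cyc_pairs q"
    using q(2) by simp
  then obtain b where ab: "(a, b) \<in> cyc_pairs q"
    by force
  have "distinct q"
    using q(1) by (simp add: cycles_def)
  then have pairs: "cyc_pairs p = insert (a, n) (insert (n, b) (cyc_pairs q - {(a, b)}))"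
    unfolding p_eq by (rule cyc_pairs_insert_after[OF _ q(3) ab])
  have "b \<in> set q"
    using ab cyc_pairs_subset by blast
  then have "b < n"
    using q(1) by (auto simp: cycles_def)
  then have "odd b"
    using p_drops pairs by auto
  have "\<forall>(x, y) \<in> cyc_pairs q. y < x \<longrightarrow> odd y"
    using p_drops \<open>odd b\<close> unfolding pairs by auto
  then have "q \<in> cycles_o (n - 1)"
    using q(1) by (simp add: cycles_o_iff)
  moreover have "(a, b) \<in> odd_end_pairs q"
    using ab \<open>odd b\<close> by (simp add: odd_end_pairs_def)
  ultimately show thesis
    using that p_eq by blast
qed

lemma insert_after_inj:
  assumes "2 \<le> n"
    and q: "q \<in> cycles_o (n - 1)" "(a, b) \<in> odd_end_pairs q"
    and q': "q' \<in> cycles_o (n - 1)" "(a', b') \<in> odd_end_pairs q'"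
    and eq: "insert_after n a q = insert_after n a' q'"
  shows "q = q'" "a = a'" "b = b'"
proof -
  let ?p = "insert_after n a q"
  have "n \<notin> set q" "n \<notin> set q'"
    using q(1) q'(1) by (auto simp: cycles_o_def cycles_def)
  then show "q = q'"
    using eq by (metis filter_insert_after)
  have "distinct ?p"
    using insert_after_mem_cycles_o(1)[OF assms(1) q] by (simp add: cycles_o_def cycles_def)
  moreover have "(a, n) \<in> cyc_pairs ?p" "(n, b) \<in> cyc_pairs ?p"
    using insert_after_mem_cycles_o(2)[OF assms(1) q] by auto
  moreover have "(a', n) \<in> cyc_pairs ?p" "(n, b') \<in> cyc_pairs ?p"
    using insert_after_mem_cycles_o(2)[OF assms(1) q'] eq by auto
  ultimately show "a = a'" "b = b'"
    by (simp_all add: cyc_pairs_unique_fst cyc_pairs_unique_snd)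
qed

lemma bij_betw_insert_after:
  assumes "2 \<le> n"
  shows "bij_betw (\<lambda>(q, a, b). insert_after n a q)
    (SIGMA q:cycles_o (n - 1). odd_end_pairs q) (cycles_o n)"
proof (rule bij_betw_imageI)
  show "inj_on (\<lambda>(q, a, b). insert_after n a q) (SIGMA q:cycles_o (n - 1). odd_end_pairs q)"
  proof (rule inj_onI)
    fix x x'
    assume "x \<in> (SIGMA q:cycles_o (n - 1). odd_end_pairs q)"
      and "x' \<in> (SIGMA q:cycles_o (n - 1). odd_end_pairs q)"
      and "(\<lambda>(q, a, b). insert_after n a q) x = (\<lambda>(q, a, b). insert_after n a q) x'"
    moreover obtain q a b q' a' b' where "x = (q, a, b)" "x' = (q', a', b')"
      by (metis prod_cases3)
    ultimately show "x = x'"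
      using insert_after_inj[OF assms, of q a b q' a' b'] by simp
  qed
  show "(\<lambda>(q, a, b). insert_after n a q) ` (SIGMA q:cycles_o (n - 1). odd_end_pairs q) = cycles_o n"
  proof
    show "(\<lambda>(q, a, b). insert_after n a q) ` (SIGMA q:cycles_o (n - 1). odd_end_pairs q) \<subseteq> cycles_o n"
      using insert_after_mem_cycles_o(1)[OF assms] by auto
    show "cycles_o n \<subseteq> (\<lambda>(q, a, b). insert_after n a q) ` (SIGMA q:cycles_o (n - 1). odd_end_pairs q)"
      by (force elim: cycles_o_obtain_insert_after[OF assms])
  qed
qed

lemma card_odd_atLeastAtMost: "card {y \<in> {1..m::nat}. odd y} = (m + 1) div 2"
proof (induction m)
  case (Suc m)
  have "{y \<in> {1..Suc m}. odd y} = {y \<in> {1..m}. odd y} \<union> (if odd (Suc m) then {Suc m} else {})"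
    by (auto simp: le_Suc_eq)
  with Suc show ?case
    by auto
qed simp

lemma card_odd_end_pairs:
  assumes "q \<in> cycles m"
  shows "card (odd_end_pairs q) = (m + 1) div 2"
proof -
  have q: "distinct q" "set q = {1..m}"
    using assms by (auto simp: cycles_def)
  have "odd_end_pairs q = {e \<in> cyc_pairs q. odd (snd e)}"
    by (auto simp: odd_end_pairs_def)
  then have "snd ` odd_end_pairs q = {y \<in> {1..m}. odd y}"
    using Compr_image_eq[of snd "cyc_pairs q" odd] q(2) by simp
  moreover have "inj_on snd (odd_end_pairs q)"
    by (rule inj_onI) (auto simp: odd_end_pairs_def intro: cyc_pairs_unique_fst[OF q(1)])
  ultimately show ?thesis
    using card_image card_odd_atLeastAtMost by metis
qed

lemma card_eo_drops_insert_after: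
  assumes "2 \<le> n" "q \<in> cycles_o (n - 1)" "e \<in> odd_end_pairs q"
  shows "card (eo_drops (insert_after n (fst e) q))
    = card (eo_drops q) - (if e \<in> eo_drops q then 1 else 0) + (if even n then 1 else 0)"
proof -
  obtain a b where e: "e = (a, b)"
    by fastforce
  have q: "set q = {1..n - 1}"
    using assms(2) by (simp add: cycles_o_def cycles_def)
  have ab: "(a, b) \<in> cyc_pairs q" "odd b"
    using assms(3) by (simp_all add: e odd_end_pairs_def)
  then have "a \<in> set q" "b \<in> set q"
    using cyc_pairs_subset by blast+
  then have "a < n" "b < n" "n \<notin> set q"
    using q by auto
  then have "(n, b) \<notin> cyc_pairs q"
    using cyc_pairs_subset by blast
  then have "eo_drops (insert_after n a q) = (eo_drops q - {(a, b)}) \<union> (if even n then {(n, b)} else {})"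
    using \<open>a < n\<close> \<open>b < n\<close> ab(2)
    unfolding eo_drops_def insert_after_mem_cycles_o(2)[OF assms(1,2) assms(3)[unfolded e]]
    by auto
  moreover have "(n, b) \<notin> eo_drops q"
    using \<open>(n, b) \<notin> cyc_pairs q\<close> by (simp add: eo_drops_def)
  moreover have "finite (eo_drops q)"
    by (rule finite_subset[OF _ finite_cyc_pairs]) (auto simp: eo_drops_def)
  ultimately show ?thesis
    by (auto simp: e card_insert_if)
qed

section \<open>The distribution polynomial of even-odd drops\<close>

lemma sum_if_mem_subset:
  assumes "finite B" "A \<subseteq> B"
  shows "(\<Sum>x\<in>B. if x \<in> A then u else v)
    = of_nat (card A) * u + of_nat (card B - card A) * (v :: 'a :: semiring_1)"
proof -
  have "(\<Sum>x\<in>B. if x \<in> A then u else v) = (\<Sum>x\<in>A. u) + (\<Sum>x\<in>B - A. v)"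
    using assms by (simp add: sum.If_cases Int_absorb1 Diff_eq)
  then show ?thesis
    using assms by (simp add: card_Diff_subset finite_subset)
qed

definition drop_eo_poly :: "nat \<Rightarrow> 'a :: idom poly" where
  "drop_eo_poly n = (\<Sum>p\<in>cycles_o n. [:0, 1:] ^ drop_eo p)"

(* Inserting n into one of the k = n div 2 pairs (a, b) with b odd removes an even-odd drop for
   d = drop_eo q of them and keeps drop_eo for the others, which gives
   d y^(d - 1) + (k - d) y^d = k y^d + (1 - y) (y^d)'. *)
definition insertion_op :: "nat \<Rightarrow> 'a :: idom poly \<Rightarrow> 'a poly" where
  "insertion_op k f = of_nat k * f + (1 - [:0, 1:]) * pderiv f"

lemma insertion_op_add: "insertion_op k (f + g) = insertion_op k f + insertion_op k g"
  by (simp add: insertion_op_def pderiv_add algebra_simps)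

lemma insertion_op_sum: "insertion_op k (sum f A) = (\<Sum>x\<in>A. insertion_op k (f x))"
  using higher_pderiv_sum[of 1 f A]
  by (simp add: insertion_op_def sum.distrib sum_distrib_left)

lemma insertion_op_of_nat_mult: "insertion_op k (of_nat c * f) = of_nat c * insertion_op k f"
  by (simp add: insertion_op_def pderiv_mult algebra_simps)

lemma pderiv_linear_power:
  "pderiv ([:c, 1:] ^ d) = of_nat d * ([:c, 1:] ^ (d - 1) :: 'a :: idom poly)"
  by (simp add: pderiv_power pderiv_pCons of_nat_poly)

lemma insertion_op_X_power:
  assumes "d \<le> k"
  shows "insertion_op k ([:0, 1:] ^ d)
    = of_nat d * [:0, 1:] ^ (d - 1) + of_nat (k - d) * ([:0, 1:] ^ d :: 'a :: idom poly)"
proof (cases d)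
  case (Suc d')
  define X :: "'a poly" where "X = [:0, 1:]"
  define P where "P = X ^ d'"
  have power: "X ^ d = X * P" "X ^ (d - 1) = P"
    by (simp_all only: P_def Suc power_Suc diff_Suc_1)
  have "pderiv (X * P) = of_nat d * P"
    unfolding power(1)[symmetric] by (simp add: X_def P_def Suc pderiv_linear_power del: power_Suc)
  then have "insertion_op k (X ^ d) = of_nat k * (X * P) + (1 - X) * (of_nat d * P)"
    by (simp only: insertion_op_def X_def[symmetric] power)
  also have "\<dots> = of_nat d * P + (of_nat k - of_nat d) * (X * P)"
    by (simp add: algebra_simps)
  also have "\<dots> = of_nat d * X ^ (d - 1) + of_nat (k - d) * X ^ d"
    by (simp only: power of_nat_diff[OF assms])
  finally show ?thesis
    by (simp only: X_def)
qed (simp add: insertion_op_def)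

lemma insertion_op_shifted_X_power:
  assumes "j \<le> k"
  shows "insertion_op k ([:-1, 1:] ^ j) = of_nat (k - j) * ([:-1, 1:] ^ j :: 'a :: idom poly)"
proof (cases j)
  case (Suc j')
  define U :: "'a poly" where "U = [:-1, 1:]"
  define P where "P = U ^ j'"
  have power: "U ^ j = U * P"
    by (simp only: P_def Suc power_Suc)
  have "pderiv (U * P) = of_nat j * P"
    unfolding power[symmetric] by (simp add: U_def P_def Suc pderiv_linear_power del: power_Suc)
  moreover have "1 - [:0, 1:] = - U"
    by (simp add: U_def one_pCons)
  ultimately have "insertion_op k (U ^ j) = of_nat k * (U * P) + - U * (of_nat j * P)"
    by (simp only: insertion_op_def U_def[symmetric] power)
  also have "\<dots> = (of_nat k - of_nat j) * (U * P)"
    by (simp add: algebra_simps)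
  finally show ?thesis
    by (simp only: U_def[symmetric] power of_nat_diff[OF assms])
qed (simp add: insertion_op_def)

lemma sum_odd_end_pairs_insert_after:
  assumes "2 \<le> n" "q \<in> cycles_o (n - 1)"
  shows "(\<Sum>e\<in>odd_end_pairs q. [:0, 1:] ^ drop_eo (insert_after n (fst e) q))
    = [:0, 1:] ^ (if even n then 1 else 0) * insertion_op (n div 2) ([:0, 1:] ^ drop_eo q :: 'a :: idom poly)"
proof -
  let ?X = "[:0, 1:] :: 'a poly"
  let ?\<epsilon> = "if even n then 1 else 0 :: nat"
  define d where "d = card (eo_drops q)"
  have q: "distinct q" "q \<in> cycles (n - 1)"
    using assms(2) by (simp_all add: cycles_o_def cycles_def)
  have subset: "eo_drops q \<subseteq> odd_end_pairs q"
    by (auto simp: eo_drops_def odd_end_pairs_def)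
  have finite: "finite (odd_end_pairs q)"
    by (rule finite_subset[OF _ finite_cyc_pairs]) (auto simp: odd_end_pairs_def)
  have card: "card (odd_end_pairs q) = n div 2"
    using card_odd_end_pairs[OF q(2)] assms(1) by simp
  then have "d \<le> n div 2"
    unfolding d_def using card_mono[OF finite subset] by simp
  have "?X ^ drop_eo (insert_after n (fst e) q) = ?X ^ ?\<epsilon> * (if e \<in> eo_drops q then ?X ^ (d - 1) else ?X ^ d)"
    if "e \<in> odd_end_pairs q" for e
  proof -
    have "distinct (insert_after n (fst e) q)"
      using insert_after_mem_cycles_o(1)[OF assms, of "fst e" "snd e"] that
      by (simp add: cycles_o_def cycles_def)
    moreover have "e \<in> eo_drops q \<Longrightarrow> 1 \<le> d"
      unfolding d_def using finite_subset[OF subset finite] by (auto simp: Suc_le_eq card_gt_0_iff)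
    ultimately have "drop_eo (insert_after n (fst e) q) = ?\<epsilon> + (if e \<in> eo_drops q then d - 1 else d)"
      using card_eo_drops_insert_after[OF assms that] by (auto simp: drop_eo_eq_card d_def)
    then show ?thesis
      by (cases "e \<in> eo_drops q") (simp_all only: power_add if_True if_False)
  qed
  then have "(\<Sum>e\<in>odd_end_pairs q. ?X ^ drop_eo (insert_after n (fst e) q))
      = ?X ^ ?\<epsilon> * (\<Sum>e\<in>odd_end_pairs q. if e \<in> eo_drops q then ?X ^ (d - 1) else ?X ^ d)"
    by (simp add: sum_distrib_left)
  also have "\<dots> = ?X ^ ?\<epsilon> * (of_nat d * ?X ^ (d - 1) + of_nat (n div 2 - d) * ?X ^ d)"
    by (simp only: sum_if_mem_subset[OF finite subset] card d_def[symmetric])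
  also have "\<dots> = ?X ^ ?\<epsilon> * insertion_op (n div 2) (?X ^ drop_eo q)"
    by (simp only: drop_eo_eq_card[OF q(1)] d_def[symmetric] insertion_op_X_power[OF \<open>d \<le> n div 2\<close>])
  finally show ?thesis .
qed

lemma drop_eo_poly_rec:
  assumes "2 \<le> n"
  shows "drop_eo_poly n
    = [:0, 1:] ^ (if even n then 1 else 0) * insertion_op (n div 2) (drop_eo_poly (n - 1) :: 'a :: idom poly)"
proof -
  have finite: "finite (cycles_o (n - 1))" "\<forall>q \<in> cycles_o (n - 1). finite (odd_end_pairs q)"
    using finite_cycles_o finite_cyc_pairs by (auto simp: odd_end_pairs_def intro: finite_subset)
  have "drop_eo_poly n = (\<Sum>x\<in>(SIGMA q:cycles_o (n - 1). odd_end_pairs q).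
      [:0, 1:] ^ drop_eo ((\<lambda>(q, a, b). insert_after n a q) x) :: 'a poly)"
    unfolding drop_eo_poly_def by (rule sum.reindex_bij_betw[OF bij_betw_insert_after[OF assms], symmetric])
  also have "\<dots> = (\<Sum>q\<in>cycles_o (n - 1). \<Sum>e\<in>odd_end_pairs q. [:0, 1:] ^ drop_eo (insert_after n (fst e) q))"
    by (subst sum.Sigma[OF finite]) (simp add: case_prod_unfold)
  also have "\<dots> = (\<Sum>q\<in>cycles_o (n - 1).
      [:0, 1:] ^ (if even n then 1 else 0) * insertion_op (n div 2) ([:0, 1:] ^ drop_eo q))"
    by (simp add: sum_odd_end_pairs_insert_after[OF assms])
  also have "\<dots> = [:0, 1:] ^ (if even n then 1 else 0) * insertion_op (n div 2) (drop_eo_poly (n - 1))"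
    by (simp add: drop_eo_poly_def insertion_op_sum sum_distrib_left)
  finally show ?thesis .
qed

lemma cycles_1: "cycles 1 = {[1]}"
proof -
  have "p = [1]" if "distinct p" "set p = {1}" for p :: "nat list"
  proof -
    have "length p = 1"
      using distinct_card[OF that(1)] that(2) by simp
    then obtain x where "p = [x]"
      by (metis One_nat_def length_0_conv length_Suc_conv)
    with that(2) show ?thesis
      by simp
  qed
  then show ?thesis
    by (auto simp: cycles_def)
qed

lemma cycles_o_1: "cycles_o 1 = {[1]}"
proof (rule set_eqI)
  fix p
  show "p \<in> cycles_o 1 \<longleftrightarrow> p \<in> {[1]}"
    unfolding cycles_o_iff cycles_1 by (auto simp: cyc_pairs_def)
qed

lemma drop_eo_poly_1: "drop_eo_poly 1 = 1"
proof -
  have "eo_drops [1] = {}"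
    by (simp add: eo_drops_def cyc_pairs_def)
  then show ?thesis
    unfolding drop_eo_poly_def cycles_o_1 by (simp add: drop_eo_eq_card)
qed

section \<open>Closed form in the variable y - 1\<close>

(* pronic_h M j is the complete homogeneous symmetric polynomial h_j(1*2, 2*3, ..., M(M+1)),
   i.e. the coefficient of x^j in 1 / prod_{k = 1..M} (1 - k(k+1) x). *)
fun pronic_h :: "nat \<Rightarrow> nat \<Rightarrow> nat" where
  "pronic_h m 0 = 1"
| "pronic_h 0 (Suc j) = 0"
| "pronic_h (Suc m) (Suc j) = pronic_h m (Suc j) + Suc m * Suc (Suc m) * pronic_h (Suc m) j"

(* The coefficients of t^(2N+1) and t^(2N+2) in the right-hand side, written in u = y - 1;
   the summand (y - 1) t^2 is accounted for separately. *)
definition odd_series_coeff :: "'a :: comm_semiring_1 \<Rightarrow> nat \<Rightarrow> 'a" where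
  "odd_series_coeff u N = (\<Sum>m\<le>N. of_nat (fact m * fact m * pronic_h m (N - m)) * u ^ (N - m))"

definition even_series_coeff :: "'a :: comm_semiring_1 \<Rightarrow> nat \<Rightarrow> 'a" where
  "even_series_coeff u N = (\<Sum>m\<le>N. of_nat (fact (Suc m) * fact m * pronic_h (Suc m) (N - m)) * u ^ (N - m))"

lemma odd_series_coeff_Suc:
  "odd_series_coeff u (Suc N)
    = (\<Sum>m\<le>N. of_nat (fact (Suc m) * fact (Suc m) * pronic_h (Suc m) (N - m)) * u ^ (N - m))"
  unfolding odd_series_coeff_def sum.atMost_Suc_shift by simp

lemma pronic_h_Suc_left:
  "pronic_h (Suc m) j = pronic_h m j + (if j = 0 then 0 else Suc m * Suc (Suc m) * pronic_h (Suc m) (j - 1))"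
  by (cases j) simp_all

lemma even_series_coeff_Suc:
  "even_series_coeff u (Suc N)
    = (\<Sum>m\<le>Suc N. of_nat (fact (Suc m) * fact m * pronic_h m (Suc N - m)) * u ^ (Suc N - m))
      + (\<Sum>m\<le>N. of_nat (fact (Suc (Suc m)) * fact (Suc m) * pronic_h (Suc m) (N - m)) * u ^ (Suc N - m))"
proof -
  have coeff: "fact (Suc m) * fact m * pronic_h (Suc m) (Suc N - m)
      = fact (Suc m) * fact m * pronic_h m (Suc N - m)
        + (if m \<le> N then fact (Suc (Suc m)) * fact (Suc m) * pronic_h (Suc m) (N - m) else 0)" for m
    by (cases "m \<le> N") (simp_all add: pronic_h_Suc_left Suc_diff_le algebra_simps)
  have "of_nat (fact (Suc m) * fact m * pronic_h (Suc m) (Suc N - m)) * u ^ (Suc N - m)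
      = of_nat (fact (Suc m) * fact m * pronic_h m (Suc N - m)) * u ^ (Suc N - m)
        + (if m \<le> N then of_nat (fact (Suc (Suc m)) * fact (Suc m) * pronic_h (Suc m) (N - m)) * u ^ (Suc N - m)
           else 0)" for m
    unfolding coeff
    by (cases "m \<le> N")
      (simp_all only: if_True if_False of_nat_add distrib_right of_nat_0 mult_zero_left add_0_right)
  then show ?thesis
    unfolding even_series_coeff_def by (simp add: sum.distrib)
qed

lemma even_series_coeff_conv:
  fixes u :: "'a :: comm_semiring_1"
  shows "(1 + u) * (\<Sum>m\<le>N. of_nat (fact (Suc m) * fact m * pronic_h m (N - m)) * u ^ (N - m))
    = even_series_coeff u N + (if N = 0 then u else 0)"
proof (cases N)
  case 0
  then show ?thesis
    by (simp add: even_series_coeff_def algebra_simps)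
next
  case (Suc N')
  have "u * (\<Sum>m\<le>Suc N'. of_nat (fact (Suc m) * fact m * pronic_h m (Suc N' - m)) * u ^ (Suc N' - m))
      = (\<Sum>m\<le>N'. of_nat (fact (Suc (Suc m)) * fact (Suc m) * pronic_h (Suc m) (N' - m)) * u ^ (Suc N' - m))"
    unfolding sum.atMost_Suc_shift distrib_left sum_distrib_left
    by (auto intro!: sum.cong simp: Suc_diff_le algebra_simps simp del: fact_Suc)
  then show ?thesis
    by (simp add: Suc even_series_coeff_Suc distrib_right)
qed

lemma insertion_op_sum_shifted_X_powers:
  assumes "\<And>m. m \<in> A \<Longrightarrow> e m \<le> k"
  shows "insertion_op k (\<Sum>m\<in>A. of_nat (c m) * [:-1, 1:] ^ e m)
    = (\<Sum>m\<in>A. of_nat (c m * (k - e m)) * ([:-1, 1:] ^ e m :: 'a :: idom poly))"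
  unfolding insertion_op_sum insertion_op_of_nat_mult
  by (intro sum.cong refl) (simp add: assms insertion_op_shifted_X_power)

lemma insertion_op_odd_series_coeff:
  "insertion_op (Suc N) (odd_series_coeff [:-1, 1:] N)
    = (\<Sum>m\<le>N. of_nat (fact (Suc m) * fact m * pronic_h m (N - m)) * ([:-1, 1:] ^ (N - m) :: 'a :: idom poly))"
  unfolding odd_series_coeff_def
  by (subst insertion_op_sum_shifted_X_powers) (auto intro!: sum.cong simp: algebra_simps Suc_diff_le)

lemma insertion_op_even_series_coeff:
  "insertion_op (Suc N) (even_series_coeff [:-1, 1:] N) = (odd_series_coeff [:-1, 1:] (Suc N) :: 'a :: idom poly)"
  unfolding even_series_coeff_def odd_series_coeff_Suc
  by (subst insertion_op_sum_shifted_X_powers) (auto intro!: sum.cong simp: algebra_simps Suc_diff_le)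

lemma drop_eo_poly_even_if_odd:
  assumes "drop_eo_poly (2 * N + 1) = (odd_series_coeff [:-1, 1:] N :: 'a :: idom poly)"
  shows "drop_eo_poly (2 * N + 2)
    = even_series_coeff [:-1, 1:] N + (if N = 0 then [:-1, 1:] else (0 :: 'a poly))"
proof -
  have "drop_eo_poly (2 * N + 2) = [:0, 1:] * insertion_op (Suc N) (drop_eo_poly (2 * N + 1) :: 'a poly)"
    using drop_eo_poly_rec[of "2 * N + 2"] by simp
  also have "\<dots> = (1 + [:-1, 1:]) * (\<Sum>m\<le>N. of_nat (fact (Suc m) * fact m * pronic_h m (N - m)) * [:-1, 1:] ^ (N - m))"
    unfolding assms insertion_op_odd_series_coeff by (simp add: one_pCons)
  finally show ?thesis
    by (simp only: even_series_coeff_conv)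
qed

lemma drop_eo_poly_odd: "drop_eo_poly (2 * N + 1) = (odd_series_coeff [:-1, 1:] N :: 'a :: idom poly)"
proof (induction N)
  case 0
  then show ?case
    using drop_eo_poly_1 by (simp add: odd_series_coeff_def)
next
  case (Suc N)
  have "insertion_op (Suc 0) [:-1, 1:] = (0 :: 'a poly)" "insertion_op (Suc N) 0 = (0 :: 'a poly)"
    using insertion_op_shifted_X_power[of 1 1] by (simp_all add: insertion_op_def)
  have "odd (2 * N + 3)" "(2 * N + 3) div 2 = Suc N" "2 * N + 3 - 1 = 2 * N + 2" "2 * Suc N + 1 = 2 * N + 3"
    by presburger+
  then have "drop_eo_poly (2 * Suc N + 1) = insertion_op (Suc N) (drop_eo_poly (2 * N + 2) :: 'a poly)"
    using drop_eo_poly_rec[of "2 * N + 3"] by (simp only: if_False power_0 mult_1_left) simp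
  also have "\<dots> = insertion_op (Suc N) (even_series_coeff [:-1, 1:] N)
      + insertion_op (Suc N) (if N = 0 then [:-1, 1:] else 0)"
    unfolding drop_eo_poly_even_if_odd[OF Suc.IH] insertion_op_add ..
  also have "\<dots> = odd_series_coeff [:-1, 1:] (Suc N)"
    using \<open>insertion_op (Suc 0) [:-1, 1:] = 0\<close> \<open>insertion_op (Suc N) 0 = 0\<close>
    by (simp add: insertion_op_even_series_coeff)
  finally show ?case .
qed

lemma poly_odd_series_coeff [simp]: "poly (odd_series_coeff p N) y = odd_series_coeff (poly p y) N"
  by (simp add: odd_series_coeff_def poly_sum)

lemma poly_even_series_coeff [simp]: "poly (even_series_coeff p N) y = even_series_coeff (poly p y) N"
  by (simp add: even_series_coeff_def poly_sum)

lemma poly_drop_eo_poly: "poly (drop_eo_poly n) y = (\<Sum>p\<in>cycles_o n. y ^ drop_eo p)"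
  by (simp add: drop_eo_poly_def poly_sum)

lemma sum_cycles_o_odd:
  fixes y :: "'a :: idom"
  shows "(\<Sum>p\<in>cycles_o (2 * N + 1). y ^ drop_eo p) = odd_series_coeff (y - 1) N"
  using arg_cong[OF drop_eo_poly_odd[of N], of "\<lambda>f. poly f y"] by (simp add: poly_drop_eo_poly)

lemma sum_cycles_o_even:
  fixes y :: "'a :: idom"
  shows "(\<Sum>p\<in>cycles_o (2 * N + 2). y ^ drop_eo p)
    = even_series_coeff (y - 1) N + (if N = 0 then y - 1 else 0)"
  using arg_cong[OF drop_eo_poly_even_if_odd[OF drop_eo_poly_odd[of N]], of "\<lambda>f. poly f y"]
  by (simp add: poly_drop_eo_poly)

section \<open>The generating function\<close>

unbundle fps_syntax

definition pronic_series :: "'a :: comm_semiring_1 \<Rightarrow> nat \<Rightarrow> 'a fps" where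
  "pronic_series u M = Abs_fps (\<lambda>i. if even i then of_nat (pronic_h M (i div 2)) * u ^ (i div 2) else 0)"

lemma pronic_series_0: "pronic_series u 0 = 1"
proof (rule fps_ext)
  fix i
  show "pronic_series u 0 $ i = 1 $ i"
    by (cases "i div 2") (auto simp: pronic_series_def)
qed

lemma pronic_series_Suc:
  fixes u :: "'a :: comm_ring_1"
  shows "(1 - fps_const (of_nat (Suc M * Suc (Suc M)) * u) * fps_X ^ 2) * pronic_series u (Suc M)
    = pronic_series u M"
proof (rule fps_ext)
  fix i
  show "((1 - fps_const (of_nat (Suc M * Suc (Suc M)) * u) * fps_X ^ 2) * pronic_series u (Suc M)) $ i
      = pronic_series u M $ i"
  proof (cases "i < 2")
    case True
    then show ?thesis
      by (cases i) (auto simp: pronic_series_def algebra_simps mult.assoc fps_X_power_mult_nth)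
  next
    case False
    then obtain j where i: "i = j + 2"
      by (metis add.commute le_add_diff_inverse not_less)
    have "Suc (j div 2) = (j + 2) div 2"
      by simp
    then show ?thesis
      by (simp add: i pronic_series_def algebra_simps mult.assoc fps_X_power_mult_nth)
  qed
qed

lemma inverse_pronic_prod:
  fixes y :: "'a :: field"
  shows "inverse (\<Prod>k = 1..M. 1 + fps_const (of_nat (k * (k + 1)) * (1 - y)) * fps_X ^ 2)
    = pronic_series (y - 1) M"
proof -
  define g where "g k = 1 + fps_const (of_nat (k * (k + 1)) * (1 - y)) * fps_X ^ 2" for k
  have "(\<Prod>k = 1..M. g k) * pronic_series (y - 1) M = 1"
  proof (induction M)
    case 0
    then show ?case
      by (simp add: pronic_series_0)
  next
    case (Suc M)
    have "of_nat (Suc M * (Suc M + 1)) * (1 - y) = - (of_nat (Suc M * Suc (Suc M)) * (y - 1))"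
      by (simp add: algebra_simps)
    then have "g (Suc M) = 1 + fps_const (- (of_nat (Suc M * Suc (Suc M)) * (y - 1))) * fps_X ^ 2"
      by (simp only: g_def)
    also have "\<dots> = 1 - fps_const (of_nat (Suc M * Suc (Suc M)) * (y - 1)) * fps_X ^ 2"
      by (simp del: fps_const_neg add: fps_const_neg[symmetric])
    finally have "g (Suc M) = 1 - fps_const (of_nat (Suc M * Suc (Suc M)) * (y - 1)) * fps_X ^ 2" .
    then have "g (Suc M) * pronic_series (y - 1) (Suc M) = pronic_series (y - 1) M"
      by (simp only: pronic_series_Suc)
    then show ?case
      using Suc.IH by (simp add: prod.nat_ivl_Suc' mult.assoc)
  qed
  then show ?thesis
    unfolding g_def by (rule fps_inverse_unique)
qed

lemma prod_pronic_index_shift: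
  "(\<Prod>k = 1..Suc m. f (k * (k - 1))) = f 0 * (\<Prod>k = 1..m. f (k * (k + 1)) :: 'a :: comm_monoid_mult)"
proof -
  have "(\<Prod>k = Suc 1..Suc m. f (k * (k - 1))) = (\<Prod>k = 1..m. f (k * (k + 1)))"
    unfolding prod.shift_bounds_cl_Suc_ivl by (simp add: mult.commute)
  then show ?thesis
    by (subst prod.atLeast_Suc_atMost) simp_all
qed

definition cycle_series_term :: "'a :: field \<Rightarrow> nat \<Rightarrow> 'a fps" where
  "cycle_series_term y m = fps_const (of_nat (fact (Suc m) * fact m)) * fps_X ^ (2 * Suc m)
      * inverse (\<Prod>k = 1..Suc m. 1 + fps_const (of_nat (k * (k + 1)) * (1 - y)) * fps_X ^ 2)
    + fps_const (of_nat (fact m * fact m)) * fps_X ^ (2 * Suc m - 1)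
      * inverse (\<Prod>k = 1..Suc m. 1 + fps_const (of_nat (k * (k - 1)) * (1 - y)) * fps_X ^ 2)"

lemma cycle_series_term_eq:
  "cycle_series_term y m
    = fps_const (of_nat (fact (Suc m) * fact m)) * (fps_X ^ (2 * m + 2) * pronic_series (y - 1) (Suc m))
    + fps_const (of_nat (fact m * fact m)) * (fps_X ^ (2 * m + 1) * pronic_series (y - 1) m)"
proof -
  have shift: "(\<Prod>k = 1..Suc m. 1 + fps_const (of_nat (k * (k - 1)) * (1 - y)) * fps_X ^ 2)
      = (\<Prod>k = 1..m. 1 + fps_const (of_nat (k * (k + 1)) * (1 - y)) * fps_X ^ 2)"
    by (simp only: prod_pronic_index_shift[where f = "\<lambda>c. 1 + fps_const (of_nat c * (1 - y)) * fps_X ^ 2"])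
      simp
  show ?thesis
    unfolding cycle_series_term_def shift inverse_pronic_prod by (simp add: mult.assoc)
qed

lemma cycle_series_term_nth_0: "cycle_series_term y m $ 0 = 0"
  by (simp add: cycle_series_term_eq fps_X_power_mult_nth)

lemma cycle_series_term_nth_odd:
  "cycle_series_term y m $ (2 * N + 1)
    = (if m \<le> N then of_nat (fact m * fact m * pronic_h m (N - m)) * (y - 1) ^ (N - m) else 0)"
proof -
  have "2 * N + 1 - (2 * m + 1) = 2 * (N - m)" "2 * m + 2 \<le> 2 * N + 1 \<Longrightarrow> odd (2 * N + 1 - (2 * m + 2))"
    by presburger+
  then show ?thesis
    unfolding cycle_series_term_eq fps_add_nth fps_mult_left_const_nth fps_X_power_mult_nth
    by (auto simp: pronic_series_def)
qed

lemma cycle_series_term_nth_even: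
  "cycle_series_term y m $ (2 * N + 2)
    = (if m \<le> N then of_nat (fact (Suc m) * fact m * pronic_h (Suc m) (N - m)) * (y - 1) ^ (N - m) else 0)"
proof -
  have "2 * N + 2 - (2 * m + 2) = 2 * (N - m)" "2 * m + 1 \<le> 2 * N + 2 \<Longrightarrow> odd (2 * N + 2 - (2 * m + 1))"
    by presburger+
  then show ?thesis
    unfolding cycle_series_term_eq fps_add_nth fps_mult_left_const_nth fps_X_power_mult_nth
    by (auto simp: pronic_series_def)
qed

lemma sums_fps_if_nth_vanishes_below:
  fixes f :: "nat \<Rightarrow> 'a :: comm_ring_1 fps"
  assumes "\<And>m n. n < m \<Longrightarrow> f m $ n = 0"
  shows "f sums Abs_fps (\<lambda>n. \<Sum>m\<le>n. f m $ n)"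
  unfolding sums_def
proof (rule tendsto_fpsI)
  fix n
  have "sum f {..<M} $ n = (\<Sum>m\<le>n. f m $ n)" if "n < M" for M
    unfolding fps_sum_nth using that assms by (intro sum.mono_neutral_cong_right) auto
  then show "\<forall>\<^sub>F M in sequentially. sum f {..<M} $ n = Abs_fps (\<lambda>n. \<Sum>m\<le>n. f m $ n) $ n"
    by (intro eventually_sequentiallyI[of "Suc n"]) simp
qed

lemma nat_zero_odd_even_cases:
  fixes n :: nat
  obtains "n = 0" | N where "n = 2 * N + 1" | N where "n = 2 * N + 2"
proof (cases "even n")
  case True
  then obtain M where "n = 2 * M"
    by blast
  then show thesis
    using that(1,3) by (cases M) auto
next
  case False
  then show thesis
    using that(2) by (blast elim: oddE)
qed

lemma cycle_series_term_nth_eq_0: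
  assumes "n < m"
  shows "cycle_series_term y m $ n = 0"
  using assms cycle_series_term_nth_0[of y m] cycle_series_term_nth_odd[of y m]
    cycle_series_term_nth_even[of y m]
  by (cases n rule: nat_zero_odd_even_cases) simp_all

lemma sum_cycle_series_term_nth:
  fixes y :: "'a :: field"
  shows "(\<Sum>m\<le>n. cycle_series_term y m $ n)
    = (if n = 0 then 0 else \<Sum>p\<in>cycles_o n. y ^ drop_eo p) - (if n = 2 then y - 1 else 0)"
proof -
  have restrict: "(\<Sum>m\<le>n. if m \<le> N then g m else 0) = (\<Sum>m\<le>N. g m)"
    if "N \<le> n" for n N :: nat and g :: "nat \<Rightarrow> 'a"
    using that by (intro sum.mono_neutral_cong_right) auto
  show ?thesis
  proof (cases n rule: nat_zero_odd_even_cases)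
    case 1
    then show ?thesis
      by (simp add: cycle_series_term_nth_0)
  next
    case (2 N)
    then show ?thesis
      using cycle_series_term_nth_odd[of y _ N] restrict[of N n] sum_cycles_o_odd[of y N]
      by (simp add: odd_series_coeff_def)
  next
    case (3 N)
    then show ?thesis
      using cycle_series_term_nth_even[of y _ N] restrict[of N n] sum_cycles_o_even[of y N]
      by (simp add: even_series_coeff_def)
  qed
qed

lemma cycle_series_term_sums:
  fixes y :: "'a :: field"
  shows "cycle_series_term y
    sums (Abs_fps (\<lambda>n. if n = 0 then 0 else \<Sum>p\<in>cycles_o n. y ^ drop_eo p) - fps_const (y - 1) * fps_X ^ 2)"
proof -
  have "cycle_series_term y sums Abs_fps (\<lambda>n. \<Sum>m\<le>n. cycle_series_term y m $ n)"
    using cycle_series_term_nth_eq_0 by (rule sums_fps_if_nth_vanishes_below)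
  moreover have "Abs_fps (\<lambda>n. \<Sum>m\<le>n. cycle_series_term y m $ n)
      = Abs_fps (\<lambda>n. if n = 0 then 0 else \<Sum>p\<in>cycles_o n. y ^ drop_eo p) - fps_const (y - 1) * fps_X ^ 2"
    by (rule fps_ext) (simp add: sum_cycle_series_term_nth)
  ultimately show ?thesis
    by simp
qed

theorem theorem1p4:
  defines "T \<equiv> (\<lambda>m. fps_const (of_nat (fact (Suc m) * fact m)) * fps_X ^ (2 * Suc m)
          * inverse (\<Prod>k = 1..Suc m. 1 + fps_const (of_nat (k * (k + 1)) * (1 - yvar)) * fps_X ^ 2)
        + fps_const (of_nat (fact m * fact m)) * fps_X ^ (2 * Suc m - 1)
          * inverse (\<Prod>k = 1..Suc m. 1 + fps_const (of_nat (k * (k - 1)) * (1 - yvar)) * fps_X ^ 2))"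
  shows "summable T \<and>
    Abs_fps (\<lambda>n. if n = 0 then 0 else \<Sum>p \<in> cycles_o n. yvar ^ drop_eo p)
      = fps_const (yvar - 1) * fps_X ^ 2 + suminf T"
proof -
  have "T = cycle_series_term yvar"
    unfolding T_def by (intro ext) (simp only: cycle_series_term_def)
  then have "T sums (Abs_fps (\<lambda>n. if n = 0 then 0 else \<Sum>p \<in> cycles_o n. yvar ^ drop_eo p)
      - fps_const (yvar - 1) * fps_X ^ 2)"
    using cycle_series_term_sums by simp
  then show ?thesis
    by (simp add: sums_iff)
qed

end
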